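(* $$\sigma(3,3)+3\sigma(2,4)=15\lambda(6)-8\lambda(3)^2.$$
   Context: For integers $t\geq 1$, $n\geq 1$ let $S_n^{(t)}=\sum_{k=1}^{n}\frac{1}{(2k-1)^t}$, and for integers $s\geq 2$, $t\geq 1$ let $\sigma(s,t)=\sum_{n\geq 1}\frac{S_n^{(t)}}{n^s}$. For real $s>1$, $\lambda(s)=\sum_{n\geq 1}\frac{1}{(2n-1)^s}$. *)

theory Defs
  imports "HOL-Analysis.Analysis"
begin

definition oddS :: "nat \<Rightarrow> nat \<Rightarrow> real" where
  "oddS t n = (\<Sum>k=1..n. 1 / (2 * real k - 1) ^ t)"

definition sigma :: "nat \<Rightarrow> nat \<Rightarrow> real" where
  "sigma s t = (\<Sum>n. oddS t (n + 1) / real (n + 1) ^ s)"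

definition dlambda :: "real \<Rightarrow> real" where
  "dlambda s = (\<Sum>n. 1 / (2 * real n + 1) powr s)"

end

theory Submission
  imports Defs "HOL-Real_Asymp.Real_Asymp"
begin

(* With N = n + 1 and m = 2k + 1, sigma(s,t) is the sum of 1/(N^s m^t) over the triangle
   k \<le> n, which converges absolutely when s \<ge> 2 and s + t \<ge> 4 (domination by
   1/(N^2 (k+1)^2)), so it may be summed by rows as well as by columns.

   Squaring lambda(3) with the Cauchy product and splitting 1/(m^3 a^3), where m + a = 2N,
   into partial fractions gives 8 lambda(3)^2 = 3 sigma(5,1) + 3 sigma(4,2) + 2 sigma(3,3).

   For sigma(2,4) + sigma(3,3) + sigma(4,2) + sigma(5,1) one adds 1/(N^5 (n - 2k)), whose row
   sums vanish by the symmetry k \<mapsto> n - k. By partial fractions the enlarged summand is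
   1/m^5 (1/(N - m) - 1/N) plus 5/m^6 on the diagonal N = m; the first part telescopes to 0
   down each column, so the total is 5 lambda(6). Eliminating sigma(4,2) and sigma(5,1)
   between the two relations gives the theorem. *)

lemma sum_atMost_reflect:
  fixes g :: "nat \<Rightarrow> 'a::comm_monoid_add"
  shows "(\<Sum>i\<le>n. g (n - i)) = (\<Sum>i\<le>n. g i)"
  using sum.nat_diff_reindex[of g "Suc n"] by (simp add: lessThan_Suc_atMost)

lemma sum_atMost_antisymmetric:
  fixes g :: "nat \<Rightarrow> real"
  assumes "\<And>i. i \<le> n \<Longrightarrow> g (n - i) = - g i"
  shows "(\<Sum>i\<le>n. g i) = 0"
proof -
  have "(\<Sum>i\<le>n. g i) = (\<Sum>i\<le>n. - g i)"
    by (subst sum_atMost_reflect[symmetric]) (simp add: assms)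
  then show ?thesis by (simp add: sum_negf)
qed

lemma sums_telescope_lag:
  fixes u :: "nat \<Rightarrow> 'a::real_normed_vector"
  assumes "u \<longlonglongrightarrow> 0"
  shows "(\<lambda>j. u j - u (j + p)) sums (\<Sum>i<p. u i)"
proof -
  have each: "(\<lambda>j. u (j + i) - u (Suc j + i)) sums u i" for i
    using telescope_sums'[of "\<lambda>j. u (j + i)" 0] LIMSEQ_ignore_initial_segment[OF assms, of i]
    by simp
  then have "(\<lambda>j. \<Sum>i<p. u (j + i) - u (Suc j + i)) sums (\<Sum>i<p. u i)"
    by (intro sums_sum each)
  moreover have "(\<Sum>i<p. u (j + i) - u (Suc j + i)) = u j - u (j + p)" for j
    using sum_lessThan_telescope'[of "\<lambda>i. u (j + i)" p] by simp
  ultimately show ?thesis by simp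
qed

(* The term j = k is 0 since x / 0 = 0; the partial sums telescope with lag 2k + 1, leaving
   the sum of 1/(i - k) over i \<le> 2k, which vanishes by the symmetry i \<mapsto> 2k - i. *)
lemma sums_reciprocal_difference:
  "(\<lambda>j. 1 / (real j - real k) - 1 / (real j + real k + 1)) sums 0"
proof -
  have "(\<lambda>j. 1 / (real j - real k) - 1 / (real (j + (2*k+1)) - real k))
          sums (\<Sum>i<2*k+1. 1 / (real i - real k))"
    by (rule sums_telescope_lag) real_asymp
  moreover have "(\<Sum>i<2*k+1. 1 / (real i - real k)) = 0"
    unfolding Suc_eq_plus1[symmetric] lessThan_Suc_atMost
    by (rule sum_atMost_antisymmetric) (simp add: divide_minus_right[symmetric])
  ultimately show ?thesis by (simp add: algebra_simps)
qed

lemma one_div_of_nat_le: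
  assumes "0 < a" "a \<le> b"
  shows "1 / real b \<le> 1 / real a"
  using assms by (simp add: frac_le)

lemma summable_odd_inverse_power:
  assumes "2 \<le> p"
  shows "summable (\<lambda>k. 1 / real (2*k+1)^p)"
proof (rule summable_comparison_test')
  show "summable (\<lambda>k. 1 / real (k+1)^p)"
    using inverse_power_summable[OF assms, where 'a=real]
    by (subst (asm) summable_Suc_iff[symmetric]) (simp add: inverse_eq_divide)
  show "norm (1 / real (2*k+1)^p) \<le> 1 / real (k+1)^p" for k
    using one_div_of_nat_le[of "(k+1)^p" "(2*k+1)^p"] by (simp add: power_mono)
qed

lemma has_sum_dlambda:
  assumes "2 \<le> p"
  shows "((\<lambda>k. 1 / real (2*k+1)^p) has_sum dlambda (real p)) UNIV"
proof -
  have "dlambda (real p) = (\<Sum>k. 1 / real (2*k+1)^p)"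
    unfolding dlambda_def by (simp add: powr_realpow add_pos_nonneg add.commute)
  then show ?thesis
    using summable_odd_inverse_power[OF assms]
    by (auto intro: sums_nonneg_imp_has_sum summable_sums)
qed

definition triangle :: "(nat \<times> nat) set" where
  "triangle = Sigma UNIV (\<lambda>n. {..n})"

lemma summable_on_inverse_square_product:
  "(\<lambda>(n,k). 1 / (real (n+1)^2 * real (k+1)^2)) summable_on (UNIV :: (nat \<times> nat) set)"
proof -
  define S where "S = (\<Sum>k. 1 / real (k+1)^2)"
  have "summable (\<lambda>n. inverse (real (Suc n) ^ 2))"
    using inverse_power_summable[of 2, where 'a=real] by (subst summable_Suc_iff) simp
  then have sq: "((\<lambda>k. 1 / real (k+1)^2) has_sum S) UNIV"
    unfolding S_def by (intro sums_nonneg_imp_has_sum summable_sums) (simp_all add: inverse_eq_divide)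
  show ?thesis
    unfolding UNIV_Times_UNIV[symmetric]
  proof (rule summable_on_SigmaI[where g = "\<lambda>n. 1 / real (n+1)^2 * S"])
    show "((\<lambda>k. (\<lambda>(n,k). 1 / (real (n+1)^2 * real (k+1)^2)) (n,k)) has_sum 1 / real (n+1)^2 * S) UNIV"
      for n using has_sum_cmult_right[OF sq, of "1 / real (n+1)^2"] by simp
    show "(\<lambda>n. 1 / real (n+1)^2 * S) summable_on UNIV"
      using has_sum_imp_summable[OF sq] by (rule summable_on_cmult_left)
  qed simp
qed

lemma summable_on_triangle_dominated:
  fixes f :: "nat \<times> nat \<Rightarrow> real"
  assumes "\<And>n k. k \<le> n \<Longrightarrow> \<bar>f (n,k)\<bar> \<le> C / (real (n+1)^2 * real (k+1)^2)"
  shows "f summable_on triangle"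
proof -
  have "(\<lambda>(n,k). C / (real (n+1)^2 * real (k+1)^2)) summable_on UNIV"
    using summable_on_cmult_right[OF summable_on_inverse_square_product, of C]
    by (simp add: case_prod_unfold)
  then have "(\<lambda>(n,k). C / (real (n+1)^2 * real (k+1)^2)) summable_on triangle"
    by (rule summable_on_subset_banach) simp
  then have "(\<lambda>x. norm (f x)) summable_on triangle"
  proof (rule Infinite_Sum.abs_summable_on_comparison_test')
    fix x assume "x \<in> triangle"
    then obtain n k where "x = (n,k)" "k \<le> n" by (auto simp: triangle_def)
    then show "norm (f x) \<le> (\<lambda>(n,k). C / (real (n+1)^2 * real (k+1)^2)) x"
      by (simp only: real_norm_def case_prod_conv assms)
  qed
  then show ?thesis by (rule abs_summable_summable)
qed

lemma sums_triangle_rows: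
  fixes f :: "nat \<times> nat \<Rightarrow> real"
  assumes "f summable_on triangle"
  shows "(\<lambda>n. \<Sum>k\<le>n. f (n,k)) sums infsum f triangle"
proof -
  have "((\<lambda>n. \<Sum>k\<le>n. f (n,k)) has_sum infsum f triangle) UNIV"
    using has_sum_infsum[OF assms] unfolding triangle_def
    by (rule has_sum_SigmaD) (simp add: has_sum_finite)
  then show ?thesis by (rule has_sum_imp_sums)
qed

lemma has_sum_triangle_columns:
  fixes f :: "nat \<times> nat \<Rightarrow> real"
  assumes "f summable_on triangle"
    and columns: "\<And>k. (\<lambda>j. f (j + k, k)) sums g k"
  shows "(g has_sum infsum f triangle) UNIV"
proof -
  define Q where "Q = Sigma (UNIV :: nat set) (\<lambda>k. {k..})"
  have triangle_Q: "triangle = (\<lambda>(k,n). (n,k)) ` Q" by (auto simp: triangle_def Q_def)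
  have inj: "inj_on (\<lambda>(k::nat, n::nat). (n,k)) Q" by (auto simp: inj_on_def)
  have "((f \<circ> (\<lambda>(k,n). (n,k))) has_sum infsum f triangle) Q"
    using has_sum_infsum[OF assms(1)] unfolding triangle_Q by (subst (asm) has_sum_reindex[OF inj])
  then have swapped: "((\<lambda>(k,n). f (n,k)) has_sum infsum f triangle) Q"
    by (simp add: o_def case_prod_unfold)
  have column: "((\<lambda>n. f (n,k)) has_sum g k) {k..}" for k
  proof -
    have summable: "(\<lambda>n. f (n,k)) summable_on {k..}"
      using summable_on_SigmaD1[of "\<lambda>k n. f (n,k)", OF has_sum_imp_summable[OF swapped[unfolded Q_def]]]
      by simp
    have shift: "{k..} = (\<lambda>j. j + k) ` UNIV"
    proof (intro set_eqI iffI)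
      fix n assume "n \<in> {k..}"
      then show "n \<in> (\<lambda>j. j + k) ` UNIV" by (intro image_eqI[where x="n - k"]) auto
    qed auto
    have "((\<lambda>n. f (n,k)) has_sum infsum (\<lambda>n. f (n,k)) {k..}) {k..}"
      using summable by (rule has_sum_infsum)
    then have "(((\<lambda>n. f (n,k)) \<circ> (\<lambda>j. j + k)) has_sum infsum (\<lambda>n. f (n,k)) {k..}) UNIV"
      unfolding shift by (subst (asm) has_sum_reindex) (simp_all add: inj_on_def)
    then have "(\<lambda>j. f (j + k, k)) sums infsum (\<lambda>n. f (n,k)) {k..}"
      unfolding o_def by (rule has_sum_imp_sums)
    then have "infsum (\<lambda>n. f (n,k)) {k..} = g k"
      using columns by (rule sums_unique2)
    then show ?thesis
      using has_sum_infsum[OF summable] by simp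
  qed
  from swapped show ?thesis
    unfolding Q_def by (rule has_sum_Sigma') (simp add: column)
qed

definition sigma_term :: "nat \<Rightarrow> nat \<Rightarrow> nat \<times> nat \<Rightarrow> real" where
  "sigma_term s t = (\<lambda>(n,k). 1 / (real (n+1)^s * real (2*k+1)^t))"

lemma sigma_term_dominated:
  assumes "k \<le> n" "2 \<le> s" "4 \<le> s + t"
  shows "\<bar>sigma_term s t (n,k)\<bar> \<le> 1 / (real (n+1)^2 * real (k+1)^2)"
proof -
  have "(k+1)^2 \<le> (k+1)^(s-2) * (k+1)^t"
    using assms by (simp add: power_add[symmetric] power_increasing)
  also have "\<dots> \<le> (n+1)^(s-2) * (2*k+1)^t"
    using assms by (intro mult_le_mono power_mono) auto
  finally have "(n+1)^2 * (k+1)^2 \<le> (n+1)^2 * ((n+1)^(s-2) * (2*k+1)^t)"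
    by simp
  also have "\<dots> = (n+1)^s * (2*k+1)^t"
    by (metis assms(2) le_add_diff_inverse mult.assoc power_add)
  finally have "1 / real ((n+1)^s * (2*k+1)^t) \<le> 1 / real ((n+1)^2 * (k+1)^2)"
    by (intro one_div_of_nat_le) simp_all
  then show ?thesis by (simp add: sigma_term_def)
qed

lemma oddS_Suc: "oddS t (n+1) = (\<Sum>k\<le>n. 1 / real (2*k+1)^t)"
proof -
  have "oddS t (n+1) = (\<Sum>k\<in>{Suc 0..Suc n}. 1 / (2 * real k - 1) ^ t)"
    by (simp add: oddS_def)
  also have "\<dots> = (\<Sum>k\<in>{0..n}. 1 / (2 * real (Suc k) - 1) ^ t)"
    by (rule sum.shift_bounds_cl_Suc_ivl)
  finally show ?thesis by (simp add: atMost_atLeast0 algebra_simps)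
qed

lemma sigma_has_sum:
  assumes "2 \<le> s" "4 \<le> s + t"
  shows "(sigma_term s t has_sum sigma s t) triangle"
proof -
  have summable: "sigma_term s t summable_on triangle"
    by (rule summable_on_triangle_dominated[where C=1]) (rule sigma_term_dominated[OF _ assms])
  have "(\<lambda>n. oddS t (n+1) / real (n+1)^s) = (\<lambda>n. \<Sum>k\<le>n. sigma_term s t (n,k))"
    unfolding oddS_Suc sum_divide_distrib by (simp add: sigma_term_def mult.commute)
  then have "sigma s t = infsum (sigma_term s t) triangle"
    unfolding sigma_def using sums_triangle_rows[OF summable] by (simp add: sums_iff)
  then show ?thesis using summable by (simp add: has_sum_infsum)
qed

(* Since x / 0 = 0, this vanishes on the diagonal n = 2k. *)
definition reflection_term :: "nat \<times> nat \<Rightarrow> real" where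
  "reflection_term = (\<lambda>(n,k). 1 / (real (n+1)^5 * (real n - 2 * real k)))"

lemma reflection_term_dominated:
  assumes "k \<le> n"
  shows "\<bar>reflection_term (n,k)\<bar> \<le> 1 / (real (n+1)^2 * real (k+1)^2)"
proof (cases "n = 2*k")
  case False
  then have "1 \<le> \<bar>real n - 2 * real k\<bar>" by linarith
  then have "real (n+1)^5 \<le> real (n+1)^5 * \<bar>real n - 2 * real k\<bar>"
    by (simp add: mult_le_cancel_left1)
  then have "\<bar>reflection_term (n,k)\<bar> \<le> 1 / real ((n+1)^5)"
    unfolding reflection_term_def by (simp add: abs_mult frac_le)
  also have "\<dots> \<le> 1 / real ((n+1)^2 * (k+1)^2)"
  proof (rule one_div_of_nat_le)
    have "(k+1)^2 \<le> (n+1)^3"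
      using assms by (intro order.trans[OF power_mono power_increasing]) auto
    then have "(n+1)^2 * (k+1)^2 \<le> (n+1)^2 * (n+1)^3"
      by (rule mult_le_mono2)
    then show "(n+1)^2 * (k+1)^2 \<le> (n+1)^5" by (simp flip: power_add)
  qed simp
  finally show ?thesis by simp
qed (simp add: reflection_term_def)

lemma sum_reflection_term_row: "(\<Sum>k\<le>n. reflection_term (n,k)) = 0"
proof (rule sum_atMost_antisymmetric)
  fix k assume "k \<le> n"
  then have reflect: "real n - 2 * real (n - k) = - (real n - 2 * real k)" by (simp add: of_nat_diff)
  show "reflection_term (n, n - k) = - reflection_term (n,k)"
    unfolding reflection_term_def case_prod_conv reflect mult_minus_right divide_minus_right ..
qed

lemma has_sum_reflection_term: "(reflection_term has_sum 0) triangle"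
proof -
  have summable: "reflection_term summable_on triangle"
    by (rule summable_on_triangle_dominated[where C=1]) (rule reflection_term_dominated)
  have "infsum reflection_term triangle = 0"
    using sums_triangle_rows[OF summable] unfolding sum_reflection_term_row by (simp add: sums_iff)
  with has_sum_infsum[OF summable] show ?thesis by simp
qed

(* For N = m both terms with the factor N - m are 0, as x / 0 = 0. *)
lemma weight_six_partial_fractions:
  fixes N m :: real
  assumes "N > 0" "m > 0"
  shows "1/(N^2*m^4) + 1/(N^3*m^3) + 1/(N^4*m^2) + 1/(N^5*m) + 1/(N^5*(N - m))
           = 1/m^5 * (1/(N - m) - 1/N) + (if N = m then 5/m^6 else 0)"
proof (cases "N = m")
  case False
  then have "N - m \<noteq> 0" by simp
  with assms False show ?thesis
    by (simp add: divide_simps) (simp add: algebra_simps eval_nat_numeral)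
qed (use assms in \<open>simp add: field_simps eval_nat_numeral\<close>)

lemma weight_six_sigma_sum: "sigma 2 4 + sigma 3 3 + sigma 4 2 + sigma 5 1 = 5 * dlambda 6"
proof -
  define H where "H x = sigma_term 2 4 x + sigma_term 3 3 x + sigma_term 4 2 x + sigma_term 5 1 x
                          + reflection_term x" for x
  have H: "(H has_sum sigma 2 4 + sigma 3 3 + sigma 4 2 + sigma 5 1) triangle"
    using has_sum_add[OF has_sum_add[OF has_sum_add[OF has_sum_add[OF
          sigma_has_sum[of 2 4] sigma_has_sum[of 3 3]] sigma_has_sum[of 4 2]] sigma_has_sum[of 5 1]]
          has_sum_reflection_term]
    unfolding H_def by simp
  have "(\<lambda>j. H (j + k, k)) sums (5 / real (2*k+1)^6)" for k
  proof -
    have "(\<lambda>j. 1 / real (2*k+1)^5 * (1 / (real j - real k) - 1 / (real j + real k + 1))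
               + (if j = k then 5 / real (2*j+1)^6 else 0)) sums (1 / real (2*k+1)^5 * 0 + 5 / real (2*k+1)^6)"
      by (intro sums_add sums_mult sums_reciprocal_difference sums_single)
    moreover have "H (j + k, k) = 1 / real (2*k+1)^5 * (1 / (real j - real k) - 1 / (real j + real k + 1))
               + (if j = k then 5 / real (2*j+1)^6 else 0)" for j
      using weight_six_partial_fractions[of "real (j+k+1)" "real (2*k+1)"]
      by (simp add: H_def sigma_term_def reflection_term_def algebra_simps)
    ultimately show ?thesis by simp
  qed
  then have "((\<lambda>k. 5 * (1 / real (2*k+1)^6)) has_sum sigma 2 4 + sigma 3 3 + sigma 4 2 + sigma 5 1) UNIV"
    using has_sum_triangle_columns[OF has_sum_imp_summable[OF H]] infsumI[OF H] by simp
  moreover have "((\<lambda>k. 5 * (1 / real (2*k+1)^6)) has_sum 5 * dlambda 6) UNIV"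
    using has_sum_cmult_right[OF has_sum_dlambda[of 6]] by simp
  ultimately show ?thesis by (rule has_sum_unique)
qed

lemma cube_product_partial_fractions:
  fixes m a N :: real
  assumes "m > 0" "a > 0" "m + a = 2 * N"
  shows "1/(m^3*a^3) = (3/16/(N^5*m) + 3/16/(N^4*m^2) + 1/8/(N^3*m^3))
                     + (3/16/(N^5*a) + 3/16/(N^4*a^2) + 1/8/(N^3*a^3))"
proof -
  have a: "a = 2*N - m" and "N > 0" using assms by simp_all
  then show ?thesis using assms unfolding a by (simp add: field_simps) algebra
qed

lemma dlambda3_square: "(dlambda 3)^2 = 3/8 * sigma 5 1 + 3/8 * sigma 4 2 + 1/4 * sigma 3 3"
proof -
  define x where "x k = 1 / real (2*k+1)^3" for k
  define G where "G p = 3/8 * sigma_term 5 1 p + 3/8 * sigma_term 4 2 p + 1/4 * sigma_term 3 3 p"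
    for p
  have G: "(G has_sum 3/8 * sigma 5 1 + 3/8 * sigma 4 2 + 1/4 * sigma 3 3) triangle"
    unfolding G_def by (intro has_sum_add has_sum_cmult_right sigma_has_sum) simp_all
  have pointwise: "x k * x (n-k) = (G (n,k) + G (n,n-k)) / 2" if "k \<le> n" for n k
  proof -
    define m a N where "m = real (2*k+1)" and "a = real (2*(n-k)+1)" and "N = real (n+1)"
    have "x k * x (n-k) = 1/(m^3*a^3)"
      by (simp add: x_def m_def a_def)
    also have "\<dots> = (3/16/(N^5*m) + 3/16/(N^4*m^2) + 1/8/(N^3*m^3))
                     + (3/16/(N^5*a) + 3/16/(N^4*a^2) + 1/8/(N^3*a^3))"
      using that by (intro cube_product_partial_fractions) (simp_all add: m_def a_def N_def)
    also have "\<dots> = (G (n,k) + G (n,n-k)) / 2"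
      by (simp add: G_def sigma_term_def m_def a_def N_def)
    finally show ?thesis .
  qed
  have convolution: "(\<Sum>k\<le>n. x k * x (n-k)) = (\<Sum>k\<le>n. G (n,k))" for n
  proof -
    have "(\<Sum>k\<le>n. x k * x (n-k)) = (\<Sum>k\<le>n. (G (n,k) + G (n,n-k)) / 2)"
      by (rule sum.cong) (simp_all add: pointwise)
    also have "\<dots> = ((\<Sum>k\<le>n. G (n,k)) + (\<Sum>k\<le>n. G (n,n-k))) / 2"
      by (simp only: sum_divide_distrib[symmetric] sum.distrib)
    also have "(\<Sum>k\<le>n. G (n,n-k)) = (\<Sum>k\<le>n. G (n,k))"
      by (rule sum_atMost_reflect)
    finally show ?thesis by simp
  qed
  have "dlambda 3 = (\<Sum>k. x k)"
    using has_sum_dlambda[of 3] by (simp add: x_def sums_unique has_sum_imp_sums)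
  moreover have "summable (\<lambda>k. norm (x k))"
    using summable_odd_inverse_power[of 3] by (simp add: x_def)
  ultimately have "(dlambda 3)^2 = (\<Sum>n. \<Sum>k\<le>n. x k * x (n-k))"
    by (simp add: power2_eq_square Cauchy_product)
  also have "\<dots> = infsum G triangle"
    using sums_triangle_rows[OF has_sum_imp_summable[OF G]] by (simp add: convolution sums_iff)
  finally show ?thesis using G by (simp add: infsumI)
qed

theorem mainTheorem19:
  shows "sigma 3 3 + 3 * sigma 2 4 = 15 * dlambda 6 - 8 * (dlambda 3)^2"
  using dlambda3_square weight_six_sigma_sum by linarith

end
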